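(* Let $\alpha>0$ and $\beta\in\mathbb{R}$ satisfy one of: $\beta<\alpha<1$; or $\beta<1<\alpha$; or $\beta<\alpha=1$. Then the essential norm of the generalized $\beta$-Ces\`aro operator $C_{g_\beta}:\mathcal{B}_\alpha^0\to\mathcal{B}_\alpha^0$ is $0$.
   Context: $\mathbb{D}=\{z\in\mathbb{C}:|z|<1\}$. For $\alpha>0$, the $\alpha$-Bloch space $\mathcal{B}_\alpha$ is the space of analytic functions $f$ on $\mathbb{D}$ with $\|f\|_{\mathcal{B}_\alpha}:=\sup_{z\in\mathbb{D}}(1-|z|^2)^\alpha|f'(z)|<\infty$. $\mathcal{B}_\alpha^0=\{f\in\mathcal{B}_\alpha: f(0)=0\}$, normed by $\|\cdot\|_{\mathcal{B}_\alpha}$. For $\beta\in\mathbb{R}$, let $g_\beta(w)=\sum_{j=1}^k\frac{a_j}{(1-b_jw)^\beta}+h(w)$, where $k\ge1$, $b_1,\dots,b_k$ are distinct points of the unit circle, $a_j\in\mathbb{C}$ with $|a_j|>0$, $h$ is a bounded analytic function on $\mathbb{D}$, and powers are principal branches; $C_{g_\beta}(f)(z)=\int_0^z\frac{f(w)g_\beta(w)}{w}\,dw$. The essential norm of a bounded operator $T:X\to Y$ is $\|T\|_e=\inf\{\|T+K\|: K \text{ compact}\}$. *)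

theory Defs
  imports "HOL-Complex_Analysis.Complex_Analysis" "HOL-Library.Extended_Real"
begin

text \<open>Functions on the unit disc are represented as total functions complex => complex;
only their values on the open unit disc matter.\<close>

abbreviation unit_disc :: "complex set" where
  "unit_disc \<equiv> ball 0 1"

definition bloch_norm :: "real \<Rightarrow> (complex \<Rightarrow> complex) \<Rightarrow> ereal" where
  "bloch_norm \<alpha> f = (SUP z\<in>unit_disc. ereal ((1 - (cmod z)\<^sup>2) powr \<alpha> * cmod (deriv f z)))"

definition bloch0 :: "real \<Rightarrow> (complex \<Rightarrow> complex) set" where
  "bloch0 \<alpha> = {f. f holomorphic_on unit_disc \<and> f 0 = 0 \<and> bloch_norm \<alpha> f < \<infinity>}"

definition op_norm :: "real \<Rightarrow> ((complex \<Rightarrow> complex) \<Rightarrow> (complex \<Rightarrow> complex)) \<Rightarrow> ereal" where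
  "op_norm \<alpha> T = (SUP f\<in>{f\<in>bloch0 \<alpha>. bloch_norm \<alpha> f \<le> 1}. bloch_norm \<alpha> (T f))"

definition compact_op :: "real \<Rightarrow> ((complex \<Rightarrow> complex) \<Rightarrow> (complex \<Rightarrow> complex)) \<Rightarrow> bool" where
  "compact_op \<alpha> K \<longleftrightarrow>
     (\<forall>f\<in>bloch0 \<alpha>. K f \<in> bloch0 \<alpha>) \<and>
     (\<forall>f\<in>bloch0 \<alpha>. \<forall>g\<in>bloch0 \<alpha>. (\<forall>z\<in>unit_disc. f z = g z) \<longrightarrow> (\<forall>z\<in>unit_disc. K f z = K g z)) \<and>
     (\<forall>f\<in>bloch0 \<alpha>. \<forall>g\<in>bloch0 \<alpha>. \<forall>z\<in>unit_disc. K (\<lambda>w. f w + g w) z = K f z + K g z) \<and>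
     (\<forall>f\<in>bloch0 \<alpha>. \<forall>c. \<forall>z\<in>unit_disc. K (\<lambda>w. c * f w) z = c * K f z) \<and>
     (\<forall>F. (\<forall>n::nat. F n \<in> bloch0 \<alpha> \<and> bloch_norm \<alpha> (F n) \<le> 1) \<longrightarrow>
        (\<exists>r g. strict_mono r \<and> g \<in> bloch0 \<alpha> \<and>
           ((\<lambda>n. bloch_norm \<alpha> (\<lambda>z. K (F (r n)) z - g z)) \<longlongrightarrow> 0) sequentially))"

definition ess_norm :: "real \<Rightarrow> ((complex \<Rightarrow> complex) \<Rightarrow> (complex \<Rightarrow> complex)) \<Rightarrow> ereal" where
  "ess_norm \<alpha> T = (INF K\<in>{K. compact_op \<alpha> K}. op_norm \<alpha> (\<lambda>f z. T f z + K f z))"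

definition g_beta :: "real \<Rightarrow> nat \<Rightarrow> (nat \<Rightarrow> complex) \<Rightarrow> (nat \<Rightarrow> complex) \<Rightarrow> (complex \<Rightarrow> complex)
    \<Rightarrow> complex \<Rightarrow> complex" where
  "g_beta \<beta> k a b h w = (\<Sum>j<k. a j / (1 - b j * w) powr (complex_of_real \<beta>)) + h w"

definition cesaro_op :: "(complex \<Rightarrow> complex) \<Rightarrow> (complex \<Rightarrow> complex) \<Rightarrow> complex \<Rightarrow> complex" where
  "cesaro_op g f z = contour_integral (linepath 0 z) (\<lambda>w. f w * g w / w)"

end

theory Submission
  imports Defs
begin

text \<open>
  Since \<open>C\<^sub>g - C\<^sub>g = 0\<close>, the essential norm vanishes as soon as \<open>C\<^sub>g\<close> is compact.
  The symbol grows like \<open>|g\<^sub>\<beta>(z)| \<lesssim> (1 - |z|)\<^sup>-\<^sup>\<gamma>\<close> with \<open>\<gamma> = max \<beta> 0 < min \<alpha> 1\<close>, and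
  functions of the unit ball of \<open>\<B>\<^sub>\<alpha>\<^sup>0\<close> grow like \<open>(1 - |z|)\<^sup>-\<^sup>s\<close> for every \<open>s > max 0 (\<alpha> - 1)\<close>.
  Choosing \<open>s + \<gamma> < \<alpha>\<close>, the weighted derivative \<open>(1 - |z|\<^sup>2)\<^sup>\<alpha> |f(z) g(z) / z|\<close> of \<open>C\<^sub>g f\<close>
  is uniformly small near the boundary, while on a compact subdisc it is controlled by the
  sup norm of \<open>f\<close>. By Montel's theorem a bounded sequence has a locally uniformly
  convergent subsequence, whose images therefore converge in \<open>\<B>\<^sub>\<alpha>\<close>.
\<close>

section \<open>Bloch seminorm and growth of Bloch functions\<close>

lemma bloch_norm_nonneg: "0 \<le> bloch_norm \<alpha> f"
  unfolding bloch_norm_def by (rule SUP_upper2[of 0]) auto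

lemma bloch_norm_leD:
  assumes "bloch_norm \<alpha> f \<le> ereal M" "w \<in> unit_disc"
  shows "(1 - (cmod w)\<^sup>2) powr \<alpha> * cmod (deriv f w) \<le> M"
  using assms unfolding bloch_norm_def by (simp add: SUP_le_iff)

lemma bloch_norm_leI:
  assumes "\<And>z. z \<in> unit_disc \<Longrightarrow> (f has_field_derivative f' z) (at z)"
    and "\<And>z. z \<in> unit_disc \<Longrightarrow> (1 - (cmod z)\<^sup>2) powr \<alpha> * cmod (f' z) \<le> B"
  shows "bloch_norm \<alpha> f \<le> ereal B"
  unfolding bloch_norm_def
proof (rule SUP_least)
  fix z :: complex assume z: "z \<in> unit_disc"
  have "deriv f z = f' z" using assms(1)[OF z] by (rule DERIV_imp_deriv)
  then show "ereal ((1 - (cmod z)\<^sup>2) powr \<alpha> * cmod (deriv f z)) \<le> ereal B"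
    using assms(2)[OF z] by simp
qed

lemma bloch_norm_cong:
  assumes "\<And>z. z \<in> unit_disc \<Longrightarrow> f z = g z"
  shows "bloch_norm \<alpha> f = bloch_norm \<alpha> g"
proof -
  have "deriv f z = deriv g z" if "z \<in> unit_disc" for z
  proof (rule deriv_cong_ev)
    show "\<forall>\<^sub>F w in nhds z. f w = g w"
      using eventually_nhds_in_open[OF open_ball that] by eventually_elim (simp add: assms)
  qed simp
  then show ?thesis unfolding bloch_norm_def by (intro SUP_cong) auto
qed

lemma bloch_norm_uminus:
  assumes "f holomorphic_on unit_disc"
  shows "bloch_norm \<alpha> (\<lambda>z. - f z) = bloch_norm \<alpha> f"
proof -
  have "deriv (\<lambda>w. - f w) z = - deriv f z" if "z \<in> unit_disc" for z
    using holomorphic_on_imp_differentiable_at[OF assms open_ball that] by simp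
  then show ?thesis unfolding bloch_norm_def by (intro SUP_cong) auto
qed

lemma bloch0_uminus:
  assumes "f \<in> bloch0 \<alpha>"
  shows "(\<lambda>z. - f z) \<in> bloch0 \<alpha>"
  using assms by (auto simp: bloch0_def bloch_norm_uminus intro: holomorphic_intros)

lemma bloch0_bloch_normE:
  assumes "f \<in> bloch0 \<alpha>"
  obtains M where "0 \<le> M" "bloch_norm \<alpha> f = ereal M"
proof -
  have "bloch_norm \<alpha> f < \<infinity>" using assms by (simp add: bloch0_def)
  with bloch_norm_nonneg[of \<alpha> f] show ?thesis
    using that by (cases "bloch_norm \<alpha> f") auto
qed

lemma disc_weight_bounds:
  fixes z :: complex
  assumes "cmod z < 1" "0 \<le> \<alpha>"
  shows "(1 - cmod z) powr \<alpha> \<le> (1 - (cmod z)\<^sup>2) powr \<alpha>"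
    and "(1 - (cmod z)\<^sup>2) powr \<alpha> \<le> 2 powr \<alpha> * (1 - cmod z) powr \<alpha>"
    and "(1 - (cmod z)\<^sup>2) powr \<alpha> \<le> 1"
proof -
  have factor: "1 - (cmod z)\<^sup>2 = (1 + cmod z) * (1 - cmod z)"
    by (simp add: power2_eq_square algebra_simps)
  have pos: "0 < 1 - cmod z" using assms(1) by simp
  show "(1 - cmod z) powr \<alpha> \<le> (1 - (cmod z)\<^sup>2) powr \<alpha>"
    unfolding factor using pos assms(2) by (intro powr_mono2) (auto simp: mult_le_cancel_right1)
  have "(1 - (cmod z)\<^sup>2) powr \<alpha> = (1 + cmod z) powr \<alpha> * (1 - cmod z) powr \<alpha>"
    unfolding factor using pos by (simp add: powr_mult)
  also have "\<dots> \<le> 2 powr \<alpha> * (1 - cmod z) powr \<alpha>"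
    by (intro mult_right_mono powr_mono2) (use assms in auto)
  finally show "(1 - (cmod z)\<^sup>2) powr \<alpha> \<le> 2 powr \<alpha> * (1 - cmod z) powr \<alpha>" .
  show "(1 - (cmod z)\<^sup>2) powr \<alpha> \<le> 1"
    using assms by (intro powr_le1) (auto simp: power_le_one abs_le_iff)
qed

lemma bloch_deriv_growth:
  assumes "bloch_norm \<alpha> f \<le> ereal M" "0 \<le> \<alpha>" "w \<in> unit_disc"
  shows "cmod (deriv f w) \<le> M * (1 - cmod w) powr (- \<alpha>)"
proof -
  have w: "cmod w < 1" using assms(3) by simp
  have "(1 - cmod w) powr \<alpha> * cmod (deriv f w) \<le> M"
    using bloch_norm_leD[OF assms(1,3)] disc_weight_bounds(1)[OF w assms(2)]
    by (meson mult_right_mono norm_ge_zero order_trans)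
  with w show ?thesis by (simp add: powr_minus_divide field_simps)
qed

lemma norm_le_of_deriv_growth:
  assumes hol: "f holomorphic_on unit_disc" and f0: "f 0 = 0" and "0 < s" "0 \<le> M"
    and deriv_le: "\<And>w. w \<in> unit_disc \<Longrightarrow> cmod (deriv f w) \<le> M * (1 - cmod w) powr (- s - 1)"
    and z: "z \<in> unit_disc"
  shows "cmod (f z) \<le> M / s * (1 - cmod z) powr (- s)"
proof -
  define \<rho> where "\<rho> = cmod z"
  have \<rho>: "0 \<le> \<rho>" "\<rho> < 1" using z by (auto simp: \<rho>_def)
  have pos: "0 < 1 - t * \<rho>" if "0 \<le> t" "t \<le> 1" for t
    using that \<rho> mult_left_le_one_le[of \<rho> t] by auto
  have in_disc: "of_real t * z \<in> unit_disc" if "0 \<le> t" "t \<le> 1" for t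
    using pos[OF that] that by (simp add: norm_mult \<rho>_def)
  define u where "u = (\<lambda>t::real. f (of_real t * z))"
  define \<phi> where "\<phi> = (\<lambda>t::real. M / s * (1 - t * \<rho>) powr (- s))"
  define \<phi>' where "\<phi>' = (\<lambda>t::real. M * \<rho> * (1 - t * \<rho>) powr (- s - 1))"
  have u': "(u has_vector_derivative deriv f (of_real t * z) * z) (at t)"
    if "0 \<le> t" "t \<le> 1" for t
  proof -
    have "((\<lambda>x. f (x * z)) has_field_derivative deriv f (of_real t * z) * z) (at (of_real t))"
      using holomorphic_derivI[OF hol _ in_disc[OF that], of UNIV]
      by (auto intro!: derivative_eq_intros DERIV_chain2[where f = f])
    then show ?thesis unfolding u_def by (rule has_vector_derivative_real_field)
  qed
  have \<phi>': "(\<phi> has_vector_derivative \<phi>' t) (at t)" if "0 \<le> t" "t \<le> 1" for t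
  proof -
    have "(\<phi> has_real_derivative M / s * (- s * (1 - t * \<rho>) powr (- s - 1) * (- \<rho>))) (at t)"
      unfolding \<phi>_def using pos[OF that]
      by (auto intro!: derivative_eq_intros DERIV_fun_powr[where r = "- s"])
    moreover have "M / s * (- s * (1 - t * \<rho>) powr (- s - 1) * (- \<rho>)) = \<phi>' t"
      unfolding \<phi>'_def using \<open>0 < s\<close> by (simp add: field_simps)
    ultimately show ?thesis by (simp add: has_real_derivative_iff_has_vector_derivative)
  qed
  have "cmod (u 1 - u 0) \<le> \<phi> 1 - \<phi> 0"
  proof (rule differentiable_bound_general[where f' = "\<lambda>t. deriv f (of_real t * z) * z"])
    show "continuous_on {0..1} u"
      using has_vector_derivative_continuous[OF u'] by (auto intro: continuous_at_imp_continuous_on)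
    show "continuous_on {0..1} \<phi>"
      using has_vector_derivative_continuous[OF \<phi>'] by (auto intro: continuous_at_imp_continuous_on)
    fix t :: real assume t: "0 < t" "t < 1"
    show "(u has_vector_derivative deriv f (of_real t * z) * z) (at t)"
      and "(\<phi> has_vector_derivative \<phi>' t) (at t)" using t by (auto intro: u' \<phi>')
    have "cmod (deriv f (of_real t * z) * z) = cmod (deriv f (of_real t * z)) * \<rho>"
      by (simp add: norm_mult \<rho>_def)
    also have "\<dots> \<le> M * (1 - t * \<rho>) powr (- s - 1) * \<rho>"
      using deriv_le[OF in_disc, of t] t \<rho> by (intro mult_right_mono) (auto simp: norm_mult \<rho>_def)
    also have "\<dots> = \<phi>' t" by (simp add: \<phi>'_def mult_ac)
    finally show "cmod (deriv f (of_real t * z) * z) \<le> \<phi>' t" .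
  qed simp
  moreover have "u 1 = f z" "u 0 = 0" using f0 by (auto simp: u_def)
  moreover have "\<phi> 1 - \<phi> 0 \<le> M / s * (1 - cmod z) powr (- s)"
    using \<open>0 \<le> M\<close> \<open>0 < s\<close> by (simp add: \<phi>_def \<rho>_def)
  ultimately show ?thesis by simp
qed

lemma bloch_growth:
  assumes hol: "f holomorphic_on unit_disc" and f0: "f 0 = 0"
    and M: "bloch_norm \<alpha> f \<le> ereal M" and "0 \<le> \<alpha>" "0 < s" "\<alpha> \<le> s + 1"
    and z: "z \<in> unit_disc"
  shows "cmod (f z) \<le> M / s * (1 - cmod z) powr (- s)"
proof -
  have "0 \<le> M"
    using bloch_norm_leD[OF M, of 0] by simp (meson norm_ge_zero order_trans)
  have "cmod (deriv f w) \<le> M * (1 - cmod w) powr (- s - 1)" if w: "w \<in> unit_disc" for w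
  proof -
    have "cmod (deriv f w) \<le> M * (1 - cmod w) powr (- \<alpha>)"
      by (rule bloch_deriv_growth[OF M \<open>0 \<le> \<alpha>\<close> w])
    also have "\<dots> \<le> M * (1 - cmod w) powr (- s - 1)"
      using w \<open>0 \<le> M\<close> \<open>\<alpha> \<le> s + 1\<close> by (intro mult_left_mono powr_mono') auto
    finally show ?thesis .
  qed
  then show ?thesis by (rule norm_le_of_deriv_growth[OF hol f0 \<open>0 < s\<close> \<open>0 \<le> M\<close> _ z])
qed

section \<open>Compact operators and the essential norm\<close>

lemma compact_op_uminus:
  assumes "compact_op \<alpha> K"
  shows "compact_op \<alpha> (\<lambda>f z. - K f z)"
proof -
  note K = assms[unfolded compact_op_def]
  have maps: "\<forall>f\<in>bloch0 \<alpha>. K f \<in> bloch0 \<alpha>" using K by (rule conjunct1)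
  have norm_eq: "bloch_norm \<alpha> (\<lambda>z. - K f z - - g z) = bloch_norm \<alpha> (\<lambda>z. K f z - g z)"
    if "f \<in> bloch0 \<alpha>" "g \<in> bloch0 \<alpha>" for f g
  proof -
    have "(\<lambda>z. K f z - g z) holomorphic_on unit_disc"
      using maps that by (auto simp: bloch0_def intro: holomorphic_intros)
    from bloch_norm_uminus[OF this] show ?thesis by simp
  qed
  show ?thesis
    unfolding compact_op_def
  proof (intro conjI allI impI)
    show "\<forall>f\<in>bloch0 \<alpha>. (\<lambda>z. - K f z) \<in> bloch0 \<alpha>" using maps bloch0_uminus by blast
    show "\<forall>f\<in>bloch0 \<alpha>. \<forall>g\<in>bloch0 \<alpha>. (\<forall>z\<in>unit_disc. f z = g z) \<longrightarrow>
            (\<forall>z\<in>unit_disc. - K f z = - K g z)"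
      using K[THEN conjunct2, THEN conjunct1] by (simp only: neg_equal_iff_equal)
    show "\<forall>f\<in>bloch0 \<alpha>. \<forall>g\<in>bloch0 \<alpha>. \<forall>z\<in>unit_disc. - K (\<lambda>w. f w + g w) z = - K f z + - K g z"
      using K[THEN conjunct2, THEN conjunct2, THEN conjunct1]
      by (simp only: minus_add_distrib[symmetric] neg_equal_iff_equal)
    show "\<forall>f\<in>bloch0 \<alpha>. \<forall>c. \<forall>z\<in>unit_disc. - K (\<lambda>w. c * f w) z = c * - K f z"
      using K[THEN conjunct2, THEN conjunct2, THEN conjunct2, THEN conjunct1]
      by (simp only: mult_minus_right neg_equal_iff_equal)
    fix F :: "nat \<Rightarrow> complex \<Rightarrow> complex"
    assume F: "\<forall>n. F n \<in> bloch0 \<alpha> \<and> bloch_norm \<alpha> (F n) \<le> 1"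
    obtain r g where r: "strict_mono r" and g: "g \<in> bloch0 \<alpha>"
      and lim: "(\<lambda>n. bloch_norm \<alpha> (\<lambda>z. K (F (r n)) z - g z)) \<longlonglongrightarrow> 0"
      using K[THEN conjunct2, THEN conjunct2, THEN conjunct2, THEN conjunct2] F by blast
    have "(\<lambda>n. bloch_norm \<alpha> (\<lambda>z. - K (F (r n)) z - - g z))
            = (\<lambda>n. bloch_norm \<alpha> (\<lambda>z. K (F (r n)) z - g z))"
      using F g by (intro ext norm_eq) auto
    with lim have "(\<lambda>n. bloch_norm \<alpha> (\<lambda>z. - K (F (r n)) z - - g z)) \<longlonglongrightarrow> 0"
      by (simp only:)
    with r bloch0_uminus[OF g]
    show "\<exists>r g. strict_mono r \<and> g \<in> bloch0 \<alpha> \<and>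
            (\<lambda>n. bloch_norm \<alpha> (\<lambda>z. - K (F (r n)) z - g z)) \<longlonglongrightarrow> 0"
      by blast
  qed
qed

lemma ess_norm_eq_0_if_compact_op:
  assumes "compact_op \<alpha> T"
  shows "ess_norm \<alpha> T = 0"
proof -
  have norm_0: "bloch_norm \<alpha> (\<lambda>z. 0) = 0" unfolding bloch_norm_def by simp
  then have zero_in_ball: "(\<lambda>z. 0) \<in> {f \<in> bloch0 \<alpha>. bloch_norm \<alpha> f \<le> 1}"
    by (simp add: bloch0_def)
  have "op_norm \<alpha> (\<lambda>f z. T f z + - T f z) = (SUP f\<in>{f \<in> bloch0 \<alpha>. bloch_norm \<alpha> f \<le> 1}. 0)"
    unfolding op_norm_def by (simp add: norm_0)
  also have "\<dots> = 0" using zero_in_ball by (intro SUP_const) auto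
  finally have "ess_norm \<alpha> T \<le> 0"
    unfolding ess_norm_def using compact_op_uminus[OF assms] by (intro INF_lower2[of "\<lambda>f z. - T f z"]) auto
  moreover have "0 \<le> ess_norm \<alpha> T"
    unfolding ess_norm_def op_norm_def
    by (intro INF_greatest SUP_upper2[OF zero_in_ball] bloch_norm_nonneg)
  ultimately show ?thesis by (rule antisym)
qed

section \<open>Growth of the symbol\<close>

lemma unimodular_one_minus_mult_bounds:
  fixes b w :: complex
  assumes "cmod b = 1" "cmod w < 1"
  shows "0 < Re (1 - b * w)" "1 - cmod w \<le> cmod (1 - b * w)" "cmod (1 - b * w) \<le> 2"
proof -
  have bw: "cmod (b * w) = cmod w" using assms by (simp add: norm_mult)
  show "0 < Re (1 - b * w)" using complex_Re_le_cmod[of "b * w"] bw assms by simp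
  show "1 - cmod w \<le> cmod (1 - b * w)" using norm_triangle_ineq2[of 1 "b * w"] bw by simp
  show "cmod (1 - b * w) \<le> 2" using norm_triangle_ineq4[of 1 "b * w"] bw assms by simp
qed

lemma g_beta_holomorphic:
  assumes "\<forall>j<k. cmod (b j) = 1" "h holomorphic_on unit_disc"
  shows "g_beta \<beta> k a b h holomorphic_on unit_disc"
proof -
  have "(\<lambda>w. a j / (1 - b j * w) powr (complex_of_real \<beta>)) holomorphic_on unit_disc" if "j < k" for j
  proof (intro holomorphic_intros)
    fix w assume "w \<in> unit_disc"
    then have "0 < Re (1 - b j * w)"
      using unimodular_one_minus_mult_bounds(1)[of "b j" w] assms that by simp
    then show "1 - b j * w \<notin> \<real>\<^sub>\<le>\<^sub>0" by (auto simp: complex_nonpos_Reals_iff)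
    then show "(1 - b j * w) powr (complex_of_real \<beta>) \<noteq> 0" by auto
  qed
  then show ?thesis unfolding g_beta_def[abs_def]
    by (intro holomorphic_on_add holomorphic_on_sum assms(2)) auto
qed

lemma norm_inverse_one_minus_mult_powr_le:
  fixes b w :: complex
  assumes "cmod b = 1" "cmod w < 1"
  shows "cmod (1 / (1 - b * w) powr (complex_of_real \<beta>))
           \<le> 2 powr \<bar>\<beta>\<bar> * (1 - cmod w) powr (- max \<beta> 0)"
proof -
  note bounds = unimodular_one_minus_mult_bounds[OF assms]
  have "cmod (1 / (1 - b * w) powr (complex_of_real \<beta>)) = cmod (1 - b * w) powr (- \<beta>)"
    by (simp add: norm_divide norm_powr_real_powr' powr_minus_divide)
  also have "\<dots> \<le> 2 powr \<bar>\<beta>\<bar> * (1 - cmod w) powr (- max \<beta> 0)"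
  proof (cases "0 \<le> \<beta>")
    case True
    have "cmod (1 - b * w) powr (- \<beta>) \<le> (1 - cmod w) powr (- \<beta>)"
      using True assms(2) bounds(2) by (intro powr_mono2') auto
    also have "\<dots> \<le> 2 powr \<beta> * (1 - cmod w) powr (- \<beta>)"
      using True ge_one_powr_ge_zero[of 2 \<beta>] by (simp add: mult_le_cancel_right1)
    finally show ?thesis using True by simp
  next
    case False
    have "cmod (1 - b * w) powr (- \<beta>) \<le> 2 powr (- \<beta>)"
      using False bounds(3) by (intro powr_mono2) auto
    then show ?thesis using False assms(2) by simp
  qed
  finally show ?thesis .
qed

lemma g_beta_growth:
  assumes "\<forall>j<k. cmod (b j) = 1" "bounded (h ` unit_disc)"
  obtains A where "0 \<le> A"
    "\<And>z. z \<in> unit_disc \<Longrightarrow> cmod (g_beta \<beta> k a b h z) \<le> A * (1 - cmod z) powr (- max \<beta> 0)"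
proof -
  obtain B where B: "\<And>z. z \<in> unit_disc \<Longrightarrow> cmod (h z) \<le> B"
    using assms(2) unfolding bounded_iff by (meson imageI)
  define A where "A = (\<Sum>j<k. cmod (a j)) * 2 powr \<bar>\<beta>\<bar> + max B 0"
  have "0 \<le> A" unfolding A_def by (intro add_nonneg_nonneg mult_nonneg_nonneg sum_nonneg) auto
  moreover have "cmod (g_beta \<beta> k a b h z) \<le> A * (1 - cmod z) powr (- max \<beta> 0)"
    if z: "z \<in> unit_disc" for z
  proof -
    define P where "P = (1 - cmod z) powr (- max \<beta> 0)"
    have "1 \<le> P"
      using powr_mono'[of "- max \<beta> 0" 0 "1 - cmod z"] z by (simp add: P_def)
    have "cmod (a j / (1 - b j * z) powr (complex_of_real \<beta>)) \<le> cmod (a j) * (2 powr \<bar>\<beta>\<bar> * P)"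
      if "j < k" for j
    proof -
      have "cmod (a j / (1 - b j * z) powr (complex_of_real \<beta>))
              = cmod (a j) * cmod (1 / (1 - b j * z) powr (complex_of_real \<beta>))"
        by (simp add: norm_divide)
      also have "\<dots> \<le> cmod (a j) * (2 powr \<bar>\<beta>\<bar> * P)"
        unfolding P_def using assms(1) that z
        by (intro mult_left_mono norm_inverse_one_minus_mult_powr_le) auto
      finally show ?thesis .
    qed
    then have "cmod (\<Sum>j<k. a j / (1 - b j * z) powr (complex_of_real \<beta>))
                 \<le> (\<Sum>j<k. cmod (a j)) * 2 powr \<bar>\<beta>\<bar> * P"
      by (auto simp: sum_distrib_right mult.assoc intro!: order_trans[OF norm_sum] sum_mono)
    moreover have "cmod (h z) \<le> max B 0 * P"
      using B[OF z] \<open>1 \<le> P\<close> mult_left_mono[of 1 P "max B 0"] by auto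
    ultimately show ?thesis
      unfolding g_beta_def A_def P_def[symmetric] distrib_right
      by (meson add_mono norm_triangle_le)
  qed
  ultimately show ?thesis using that by blast
qed

section \<open>The Cesaro operator\<close>

definition div_z :: "(complex \<Rightarrow> complex) \<Rightarrow> complex \<Rightarrow> complex" where
  "div_z f z = (if z = 0 then deriv f 0 else f z / z)"

lemma div_z_holomorphic:
  assumes "f holomorphic_on unit_disc" "f 0 = 0"
  shows "div_z f holomorphic_on unit_disc"
proof -
  have "(\<lambda>z. if z = 0 then deriv f 0 else (f z - f 0) / (z - 0)) holomorphic_on unit_disc"
    by (rule pole_lemma_open) (use assms in auto)
  moreover have "div_z f = (\<lambda>z. if z = 0 then deriv f 0 else (f z - f 0) / (z - 0))"
    using assms(2) by (simp add: div_z_def fun_eq_iff)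
  ultimately show ?thesis by simp
qed

lemma norm_div_z_le:
  assumes hol: "f holomorphic_on unit_disc" and f0: "f 0 = 0" and r: "0 < r" "r < 1"
    and E: "\<And>w. cmod w = r \<Longrightarrow> cmod (f w) \<le> E" and z: "cmod z \<le> r"
  shows "cmod (div_z f z) \<le> E / r"
proof (rule maximum_modulus_frontier[of "div_z f" "cball 0 r"])
  have "cball 0 r \<subseteq> unit_disc" "ball 0 r \<subseteq> unit_disc" using r by auto
  then show "div_z f holomorphic_on interior (cball 0 r)"
    and "continuous_on (closure (cball 0 r)) (div_z f)"
    using div_z_holomorphic[OF hol f0]
    by (auto intro: holomorphic_on_subset holomorphic_on_imp_continuous_on)
  fix w :: complex assume "w \<in> frontier (cball 0 r)"
  then have w: "cmod w = r" using r by (simp add: frontier_cball)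
  then show "cmod (div_z f w) \<le> E / r"
    using E[OF w] r by (auto simp: div_z_def norm_divide divide_right_mono)
qed (use z in auto)

lemma has_contour_integral_linepath_0_spike:
  assumes "(q has_contour_integral I) (linepath 0 z)" "\<And>w. w \<noteq> 0 \<Longrightarrow> p w = q w"
  shows "(p has_contour_integral I) (linepath 0 z)"
  using assms(1) unfolding has_contour_integral_def
proof (rule has_integral_spike_finite[rotated 2])
  fix t :: real assume t: "t \<in> {0..1} - {0}"
  show "p (linepath 0 z t) * vector_derivative (linepath 0 z) (at t within {0..1}) =
        q (linepath 0 z t) * vector_derivative (linepath 0 z) (at t within {0..1})"
  proof (cases "z = 0")
    case True then show ?thesis using t by (simp add: vector_derivative_linepath_within)
  next
    case False
    then have "linepath 0 z t \<noteq> 0" using t by (auto simp: linepath_def)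
    then show ?thesis using assms(2) by simp
  qed
qed simp

lemma cesaro_op_primitive:
  assumes "f holomorphic_on unit_disc" "f 0 = 0" "g holomorphic_on unit_disc"
  obtains P where "\<And>z. z \<in> unit_disc \<Longrightarrow> (P has_field_derivative div_z f z * g z) (at z)"
    and "\<And>z. z \<in> unit_disc \<Longrightarrow> cesaro_op g f z = P z - P 0"
    and "\<And>z. z \<in> unit_disc \<Longrightarrow> ((\<lambda>w. f w * g w / w) has_contour_integral (P z - P 0)) (linepath 0 z)"
proof -
  have "(\<lambda>w. div_z f w * g w) holomorphic_on unit_disc"
    by (intro holomorphic_intros div_z_holomorphic assms)
  then obtain P
    where P: "\<And>z. z \<in> unit_disc \<Longrightarrow> (P has_field_derivative div_z f z * g z) (at z within unit_disc)"
    using holomorphic_convex_primitive'[OF convex_ball open_ball] by blast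
  have integral: "((\<lambda>w. f w * g w / w) has_contour_integral (P z - P 0)) (linepath 0 z)"
    if z: "z \<in> unit_disc" for z
  proof (rule has_contour_integral_linepath_0_spike)
    have "closed_segment 0 z \<subseteq> unit_disc"
      using z by (intro closed_segment_subset convex_ball) auto
    then have "((\<lambda>w. div_z f w * g w) has_contour_integral
                 (P (pathfinish (linepath 0 z)) - P (pathstart (linepath 0 z)))) (linepath 0 z)"
      by (intro contour_integral_primitive[OF P]) auto
    then show "((\<lambda>w. div_z f w * g w) has_contour_integral (P z - P 0)) (linepath 0 z)"
      by simp
  qed (simp add: div_z_def)
  show ?thesis
  proof (rule that)
    show "(P has_field_derivative div_z f z * g z) (at z)" if "z \<in> unit_disc" for z
      using P[OF that] at_within_open[OF that open_ball] by simp
    show "cesaro_op g f z = P z - P 0" if "z \<in> unit_disc" for z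
      unfolding cesaro_op_def using integral[OF that] by (rule contour_integral_unique)
  qed (rule integral)
qed

lemma has_contour_integral_cesaro_op:
  assumes "f holomorphic_on unit_disc" "f 0 = 0" "g holomorphic_on unit_disc" "z \<in> unit_disc"
  shows "((\<lambda>w. f w * g w / w) has_contour_integral cesaro_op g f z) (linepath 0 z)"
proof -
  obtain P where "\<And>z. z \<in> unit_disc \<Longrightarrow> (P has_field_derivative div_z f z * g z) (at z)"
    and eq: "\<And>z. z \<in> unit_disc \<Longrightarrow> cesaro_op g f z = P z - P 0"
    and integral: "\<And>z. z \<in> unit_disc \<Longrightarrow>
                     ((\<lambda>w. f w * g w / w) has_contour_integral (P z - P 0)) (linepath 0 z)"
    by (rule cesaro_op_primitive[OF assms(1-3)]) blast
  show ?thesis using eq[OF assms(4)] integral[OF assms(4)] by simp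
qed

lemma cesaro_op_has_field_derivative:
  assumes "f holomorphic_on unit_disc" "f 0 = 0" "g holomorphic_on unit_disc" "z \<in> unit_disc"
  shows "(cesaro_op g f has_field_derivative div_z f z * g z) (at z)"
proof -
  obtain P where P: "\<And>z. z \<in> unit_disc \<Longrightarrow> (P has_field_derivative div_z f z * g z) (at z)"
    and eq: "\<And>z. z \<in> unit_disc \<Longrightarrow> cesaro_op g f z = P z - P 0"
    and "\<And>z. z \<in> unit_disc \<Longrightarrow>
           ((\<lambda>w. f w * g w / w) has_contour_integral (P z - P 0)) (linepath 0 z)"
    by (rule cesaro_op_primitive[OF assms(1-3)]) blast
  have "((\<lambda>w. P w - P 0) has_field_derivative div_z f z * g z) (at z)"
    using P[OF assms(4)] by (auto intro!: derivative_eq_intros)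
  then show ?thesis
    by (rule has_field_derivative_transform_within_open[OF _ open_ball assms(4)]) (simp add: eq)
qed

lemma cesaro_op_holomorphic:
  assumes "f holomorphic_on unit_disc" "f 0 = 0" "g holomorphic_on unit_disc"
  shows "cesaro_op g f holomorphic_on unit_disc"
  using cesaro_op_has_field_derivative[OF assms] holomorphic_on_open[OF open_ball] by blast

lemma cesaro_op_0 [simp]: "cesaro_op g f 0 = 0"
  by (simp add: cesaro_op_def)

lemma cesaro_op_cong:
  assumes "\<forall>w\<in>unit_disc. f w = f' w" "z \<in> unit_disc"
  shows "cesaro_op g f z = cesaro_op g f' z"
  unfolding cesaro_op_def
proof (rule contour_integral_eq)
  have "closed_segment 0 z \<subseteq> unit_disc"
    using assms(2) by (intro closed_segment_subset convex_ball) auto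
  then show "f w * g w / w = f' w * g w / w" if "w \<in> path_image (linepath 0 z)" for w
    using that assms(1) by auto
qed

context
  fixes f f' g :: "complex \<Rightarrow> complex" and z :: complex
  assumes f: "f holomorphic_on unit_disc" "f 0 = 0"
    and f': "f' holomorphic_on unit_disc" "f' 0 = 0"
    and g: "g holomorphic_on unit_disc" and z: "z \<in> unit_disc"
begin

lemma cesaro_op_add: "cesaro_op g (\<lambda>w. f w + f' w) z = cesaro_op g f z + cesaro_op g f' z"
proof -
  have "(\<lambda>w. (f w + f' w) * g w / w) = (\<lambda>w. f w * g w / w + f' w * g w / w)"
    by (simp add: fun_eq_iff add_divide_distrib distrib_right)
  then have "((\<lambda>w. (f w + f' w) * g w / w) has_contour_integral cesaro_op g f z + cesaro_op g f' z)
          (linepath 0 z)"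
    using has_contour_integral_add[OF has_contour_integral_cesaro_op[OF f g z]
        has_contour_integral_cesaro_op[OF f' g z]]
    by (simp only:)
  then show ?thesis unfolding cesaro_op_def by (rule contour_integral_unique)
qed

lemma cesaro_op_diff: "cesaro_op g (\<lambda>w. f w - f' w) z = cesaro_op g f z - cesaro_op g f' z"
proof -
  have "(\<lambda>w. (f w - f' w) * g w / w) = (\<lambda>w. f w * g w / w - f' w * g w / w)"
    by (simp add: fun_eq_iff diff_divide_distrib left_diff_distrib)
  then have "((\<lambda>w. (f w - f' w) * g w / w) has_contour_integral cesaro_op g f z - cesaro_op g f' z)
          (linepath 0 z)"
    using has_contour_integral_diff[OF has_contour_integral_cesaro_op[OF f g z]
        has_contour_integral_cesaro_op[OF f' g z]]
    by (simp only:)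
  then show ?thesis unfolding cesaro_op_def by (rule contour_integral_unique)
qed

lemma cesaro_op_cmult: "cesaro_op g (\<lambda>w. c * f w) z = c * cesaro_op g f z"
proof -
  have "((\<lambda>w. (c * f w) * g w / w) has_contour_integral c * cesaro_op g f z) (linepath 0 z)"
    using has_contour_integral_lmul[OF has_contour_integral_cesaro_op[OF f g z], of c]
    by (simp add: mult.assoc)
  then show ?thesis unfolding cesaro_op_def by (rule contour_integral_unique)
qed

end


section \<open>Compactness of the Cesaro operator\<close>

lemma weighted_div_z_mult_le_inner:
  assumes hol: "f holomorphic_on unit_disc" and f0: "f 0 = 0"
    and g_growth: "\<And>w. w \<in> unit_disc \<Longrightarrow> cmod (g w) \<le> A * (1 - cmod w) powr (- \<gamma>)"
    and "0 \<le> A" "0 \<le> \<gamma>" "0 \<le> \<alpha>" and r: "1/2 \<le> r" "r < 1"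
    and E: "\<And>w. cmod w = r \<Longrightarrow> cmod (f w) \<le> E" and z: "cmod z \<le> r"
  shows "(1 - (cmod z)\<^sup>2) powr \<alpha> * cmod (div_z f z * g z) \<le> 2 * E * A * (1 - r) powr (- \<gamma>)"
proof -
  have "0 \<le> E" using E[of "of_real r"] r by (auto intro: order_trans[OF norm_ge_zero])
  have "cmod (div_z f z) \<le> E / r" using norm_div_z_le[OF hol f0 _ r(2) E z] r by simp
  also have "\<dots> \<le> E / (1/2)" using r \<open>0 \<le> E\<close> by (intro divide_left_mono) auto
  finally have div_le: "cmod (div_z f z) \<le> 2 * E" by simp
  have "cmod (g z) \<le> A * (1 - cmod z) powr (- \<gamma>)" using g_growth z r by simp
  also have "\<dots> \<le> A * (1 - r) powr (- \<gamma>)"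
    using z r \<open>0 \<le> A\<close> \<open>0 \<le> \<gamma>\<close> by (intro mult_left_mono powr_mono2') auto
  finally have g_le: "cmod (g z) \<le> A * (1 - r) powr (- \<gamma>)" .
  have "(1 - (cmod z)\<^sup>2) powr \<alpha> * cmod (div_z f z * g z) \<le> 1 * (2 * E * (A * (1 - r) powr (- \<gamma>)))"
    unfolding norm_mult using disc_weight_bounds(3)[of z \<alpha>] z r div_le g_le \<open>0 \<le> E\<close> \<open>0 \<le> \<alpha>\<close>
    by (intro mult_mono) auto
  then show ?thesis by (simp add: mult.assoc)
qed

lemma weighted_div_z_mult_le_outer:
  assumes f_growth: "\<And>w. w \<in> unit_disc \<Longrightarrow> cmod (f w) \<le> M * (1 - cmod w) powr (- s)"
    and g_growth: "\<And>w. w \<in> unit_disc \<Longrightarrow> cmod (g w) \<le> A * (1 - cmod w) powr (- \<gamma>)"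
    and "0 \<le> M" "0 \<le> A" "0 \<le> \<alpha>" "s + \<gamma> \<le> \<alpha>"
    and r: "1/2 \<le> r" "r < cmod z" and z: "z \<in> unit_disc"
  shows "(1 - (cmod z)\<^sup>2) powr \<alpha> * cmod (div_z f z * g z)
           \<le> 2 powr (\<alpha> + 1) * M * A * (1 - r) powr (\<alpha> - s - \<gamma>)"
proof -
  have z1: "cmod z < 1" using z by simp
  have "cmod (div_z f z) = cmod (f z) / cmod z" using r by (auto simp: div_z_def norm_divide)
  also have "\<dots> \<le> cmod (f z) / (1/2)" using r by (intro divide_left_mono) auto
  also have "\<dots> \<le> 2 * (M * (1 - cmod z) powr (- s))" using f_growth[OF z] by simp
  finally have div_le: "cmod (div_z f z) \<le> 2 * (M * (1 - cmod z) powr (- s))" .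
  have "(1 - (cmod z)\<^sup>2) powr \<alpha> * cmod (div_z f z * g z)
          \<le> (2 powr \<alpha> * (1 - cmod z) powr \<alpha>)
             * ((2 * (M * (1 - cmod z) powr (- s))) * (A * (1 - cmod z) powr (- \<gamma>)))"
    unfolding norm_mult using disc_weight_bounds(2)[OF z1 \<open>0 \<le> \<alpha>\<close>] div_le g_growth[OF z]
      \<open>0 \<le> M\<close> \<open>0 \<le> A\<close>
    by (intro mult_mono) auto
  also have "\<dots> = 2 powr (\<alpha> + 1) * M * A
                   * ((1 - cmod z) powr \<alpha> * (1 - cmod z) powr (- s) * (1 - cmod z) powr (- \<gamma>))"
    by (simp add: powr_add algebra_simps)
  also have "(1 - cmod z) powr \<alpha> * (1 - cmod z) powr (- s) * (1 - cmod z) powr (- \<gamma>)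
               = (1 - cmod z) powr (\<alpha> - s - \<gamma>)"
    by (simp add: powr_add[symmetric])
  also have "2 powr (\<alpha> + 1) * M * A * (1 - cmod z) powr (\<alpha> - s - \<gamma>)
               \<le> 2 powr (\<alpha> + 1) * M * A * (1 - r) powr (\<alpha> - s - \<gamma>)"
    using z1 r \<open>0 \<le> M\<close> \<open>0 \<le> A\<close> \<open>s + \<gamma> \<le> \<alpha>\<close> by (intro mult_left_mono powr_mono2) auto
  finally show ?thesis .
qed

lemma bloch_norm_cesaro_op_le:
  assumes hol: "f holomorphic_on unit_disc" and f0: "f 0 = 0"
    and f_growth: "\<And>w. w \<in> unit_disc \<Longrightarrow> cmod (f w) \<le> M * (1 - cmod w) powr (- s)"
    and g_hol: "g holomorphic_on unit_disc"
    and g_growth: "\<And>w. w \<in> unit_disc \<Longrightarrow> cmod (g w) \<le> A * (1 - cmod w) powr (- \<gamma>)"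
    and "0 \<le> M" "0 \<le> A" "0 \<le> \<gamma>" "0 \<le> \<alpha>" "s + \<gamma> \<le> \<alpha>"
    and r: "1/2 \<le> r" "r < 1" and E: "\<And>w. cmod w = r \<Longrightarrow> cmod (f w) \<le> E"
  shows "bloch_norm \<alpha> (cesaro_op g f)
           \<le> ereal (2 * E * A * (1 - r) powr (- \<gamma>) + 2 powr (\<alpha> + 1) * M * A * (1 - r) powr (\<alpha> - s - \<gamma>))"
proof (rule bloch_norm_leI[OF cesaro_op_has_field_derivative[OF hol f0 g_hol]])
  fix z :: complex assume z: "z \<in> unit_disc"
  have "0 \<le> E" using E[of "of_real r"] r by (auto intro: order_trans[OF norm_ge_zero])
  then have inner_nonneg: "0 \<le> 2 * E * A * (1 - r) powr (- \<gamma>)" using \<open>0 \<le> A\<close> by simp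
  have outer_nonneg: "0 \<le> 2 powr (\<alpha> + 1) * M * A * (1 - r) powr (\<alpha> - s - \<gamma>)"
    using \<open>0 \<le> M\<close> \<open>0 \<le> A\<close> by simp
  show "(1 - (cmod z)\<^sup>2) powr \<alpha> * cmod (div_z f z * g z)
          \<le> 2 * E * A * (1 - r) powr (- \<gamma>) + 2 powr (\<alpha> + 1) * M * A * (1 - r) powr (\<alpha> - s - \<gamma>)"
  proof (cases "cmod z \<le> r")
    case True
    have "(1 - (cmod z)\<^sup>2) powr \<alpha> * cmod (div_z f z * g z) \<le> 2 * E * A * (1 - r) powr (- \<gamma>)"
      by (rule weighted_div_z_mult_le_inner[of f g A \<gamma> \<alpha> r E z])
        (use hol f0 g_growth assms r E True in auto)
    then show ?thesis using outer_nonneg by linarith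
  next
    case False
    have "(1 - (cmod z)\<^sup>2) powr \<alpha> * cmod (div_z f z * g z)
            \<le> 2 powr (\<alpha> + 1) * M * A * (1 - r) powr (\<alpha> - s - \<gamma>)"
      by (rule weighted_div_z_mult_le_outer[of f M s g A \<gamma> \<alpha> r z])
        (use f_growth g_growth assms r z False in auto)
    then show ?thesis using inner_nonneg by linarith
  qed
qed

lemma cesaro_op_in_bloch0:
  assumes hol: "f holomorphic_on unit_disc" and f0: "f 0 = 0"
    and f_growth: "\<And>w. w \<in> unit_disc \<Longrightarrow> cmod (f w) \<le> M * (1 - cmod w) powr (- s)"
    and g_hol: "g holomorphic_on unit_disc"
    and g_growth: "\<And>w. w \<in> unit_disc \<Longrightarrow> cmod (g w) \<le> A * (1 - cmod w) powr (- \<gamma>)"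
    and "0 \<le> M" "0 \<le> A" "0 \<le> \<gamma>" "0 \<le> \<alpha>" "s + \<gamma> \<le> \<alpha>"
  shows "cesaro_op g f \<in> bloch0 \<alpha>"
proof -
  have circle: "cmod (f w) \<le> M * (1/2) powr (- s)" if "cmod w = 1/2" for w
    using f_growth[of w] that by simp
  have "bloch_norm \<alpha> (cesaro_op g f)
          \<le> ereal (2 * (M * (1/2) powr (- s)) * A * (1 - 1/2) powr (- \<gamma>)
                   + 2 powr (\<alpha> + 1) * M * A * (1 - 1/2) powr (\<alpha> - s - \<gamma>))"
    by (rule bloch_norm_cesaro_op_le[OF hol f0 f_growth g_hol g_growth assms(6-10)])
      (use circle in auto)
  then have "bloch_norm \<alpha> (cesaro_op g f) < \<infinity>" by (rule le_less_trans) simp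
  then show ?thesis using cesaro_op_holomorphic[OF hol f0 g_hol] by (simp add: bloch0_def)
qed

lemma Montel_growth_bound:
  fixes F :: "nat \<Rightarrow> complex \<Rightarrow> complex"
  assumes hol: "\<And>n. F n holomorphic_on unit_disc"
    and growth: "\<And>n w. w \<in> unit_disc \<Longrightarrow> cmod (F n w) \<le> C * (1 - cmod w) powr (- s)"
    and "0 \<le> C" "0 \<le> s"
  obtains G r where "G holomorphic_on unit_disc" "strict_mono r"
    "\<And>w. w \<in> unit_disc \<Longrightarrow> (\<lambda>n. F (r n) w) \<longlonglongrightarrow> G w"
    "\<And>w. w \<in> unit_disc \<Longrightarrow> cmod (G w) \<le> C * (1 - cmod w) powr (- s)"
    "\<And>\<rho>. \<rho> < 1 \<Longrightarrow> uniform_limit (cball 0 \<rho>) (F \<circ> r) G sequentially"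
proof -
  have bounded_on_compact: "\<exists>B. \<forall>h\<in>range F. \<forall>w\<in>K. cmod (h w) \<le> B"
    if K: "compact K" "K \<subseteq> unit_disc" for K
  proof (cases "K = {}")
    case False
    obtain m where m: "m \<in> K" "\<And>w. w \<in> K \<Longrightarrow> cmod w \<le> cmod m"
      using continuous_attains_sup[OF K(1) False, of cmod] by (auto intro: continuous_intros)
    have "cmod (F n w) \<le> C * (1 - cmod m) powr (- s)" if "w \<in> K" for n w
    proof -
      have "cmod (F n w) \<le> C * (1 - cmod w) powr (- s)" using growth K(2) that by auto
      also have "\<dots> \<le> C * (1 - cmod m) powr (- s)"
        using m K(2) that \<open>0 \<le> C\<close> \<open>0 \<le> s\<close> by (intro mult_left_mono powr_mono2') auto
      finally show ?thesis .
    qed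
    then show ?thesis by blast
  qed simp
  obtain G r where G: "G holomorphic_on unit_disc" "strict_mono r"
    "\<And>w. w \<in> unit_disc \<Longrightarrow> (\<lambda>n. F (r n) w) \<longlonglongrightarrow> G w"
    "\<And>K. compact K \<Longrightarrow> K \<subseteq> unit_disc \<Longrightarrow> uniform_limit K (F \<circ> r) G sequentially"
  proof (rule Montel[of unit_disc "range F" F])
    show "h holomorphic_on unit_disc" if "h \<in> range F" for h using that hol by auto
  qed (use bounded_on_compact in auto)
  moreover have "cmod (G w) \<le> C * (1 - cmod w) powr (- s)" if "w \<in> unit_disc" for w
    by (rule LIMSEQ_le_const2[OF tendsto_norm[OF G(3)[OF that]]]) (use growth[OF that] in auto)
  moreover have "uniform_limit (cball 0 \<rho>) (F \<circ> r) G sequentially" if "\<rho> < 1" for \<rho>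
    using G(4)[of "cball 0 \<rho>"] that by (simp add: cball_subset_ball_iff)
  ultimately show ?thesis using that by blast
qed

lemma ereal_tendsto_0I:
  fixes X :: "nat \<Rightarrow> ereal"
  assumes "\<And>n. 0 \<le> X n" and "\<And>e. 0 < e \<Longrightarrow> \<forall>\<^sub>F n in sequentially. X n \<le> ereal e"
  shows "X \<longlonglongrightarrow> 0"
proof (rule order_tendstoI)
  fix a :: ereal assume "a < 0"
  then have "a < X n" for n using assms(1)[of n] by (rule less_le_trans)
  then show "\<forall>\<^sub>F n in sequentially. a < X n" by simp
next
  fix a :: ereal assume "0 < a"
  then obtain e where "0 < ereal e" "ereal e < a" using ereal_dense2 by blast
  then show "\<forall>\<^sub>F n in sequentially. X n < a"
    using assms(2)[of e] by (auto elim: eventually_mono intro: le_less_trans)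
qed

lemma powr_le_smallE:
  fixes K \<eta> \<epsilon> :: real
  assumes "0 < \<eta>" "0 < \<epsilon>" "0 \<le> K"
  obtains t where "0 < t" "t \<le> 1/2" "K * t powr \<eta> \<le> \<epsilon>"
proof -
  define t where "t = min (1/2) ((\<epsilon> / (K + 1)) powr (1 / \<eta>))"
  have t: "0 < t" "t \<le> 1/2" using assms by (auto simp: t_def)
  have "t powr \<eta> \<le> ((\<epsilon> / (K + 1)) powr (1 / \<eta>)) powr \<eta>"
    using assms t by (intro powr_mono2) (auto simp: t_def)
  also have "\<dots> = \<epsilon> / (K + 1)" using assms by (simp add: powr_powr)
  finally have "K * t powr \<eta> \<le> K * (\<epsilon> / (K + 1))" using assms by (intro mult_left_mono)
  also have "\<dots> \<le> \<epsilon>" using assms by (simp add: field_simps)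
  finally show ?thesis using that t by blast
qed

lemma bloch_norm_cesaro_op_diff_le:
  assumes F_hol: "F holomorphic_on unit_disc" and F0: "F 0 = 0"
    and F_growth: "\<And>w. w \<in> unit_disc \<Longrightarrow> cmod (F w) \<le> C * (1 - cmod w) powr (- s)"
    and G_hol: "G holomorphic_on unit_disc" and G0: "G 0 = 0"
    and G_growth: "\<And>w. w \<in> unit_disc \<Longrightarrow> cmod (G w) \<le> C * (1 - cmod w) powr (- s)"
    and g_hol: "g holomorphic_on unit_disc"
    and g_growth: "\<And>w. w \<in> unit_disc \<Longrightarrow> cmod (g w) \<le> A * (1 - cmod w) powr (- \<gamma>)"
    and "0 \<le> C" "0 \<le> A" "0 \<le> \<gamma>" "0 \<le> \<alpha>" "s + \<gamma> \<le> \<alpha>"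
    and r: "1/2 \<le> r" "r < 1" and close: "\<And>w. cmod w = r \<Longrightarrow> cmod (F w - G w) \<le> E"
  shows "bloch_norm \<alpha> (\<lambda>z. cesaro_op g F z - cesaro_op g G z)
           \<le> ereal (2 * E * A * (1 - r) powr (- \<gamma>)
                    + 2 powr (\<alpha> + 1) * (2 * C) * A * (1 - r) powr (\<alpha> - s - \<gamma>))"
proof -
  have "bloch_norm \<alpha> (\<lambda>z. cesaro_op g F z - cesaro_op g G z)
          = bloch_norm \<alpha> (cesaro_op g (\<lambda>w. F w - G w))"
    using cesaro_op_diff[OF F_hol F0 G_hol G0 g_hol] by (intro bloch_norm_cong) simp
  also have "\<dots> \<le> ereal (2 * E * A * (1 - r) powr (- \<gamma>)
                          + 2 powr (\<alpha> + 1) * (2 * C) * A * (1 - r) powr (\<alpha> - s - \<gamma>))"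
  proof (rule bloch_norm_cesaro_op_le[OF _ _ _ g_hol g_growth])
    show "(\<lambda>w. F w - G w) holomorphic_on unit_disc" using F_hol G_hol by (intro holomorphic_intros)
    show "cmod (F w - G w) \<le> 2 * C * (1 - cmod w) powr (- s)" if "w \<in> unit_disc" for w
      using norm_triangle_ineq4[of "F w" "G w"] F_growth[OF that] G_growth[OF that]
      unfolding mult.assoc by linarith
  qed (use F0 G0 assms(9-13) r close in auto)
  finally show ?thesis .
qed

lemma bloch_norm_cesaro_op_diff_tendsto_0:
  assumes F_hol: "\<And>n. F n holomorphic_on unit_disc" and F0: "\<And>n. F n 0 = 0"
    and F_growth: "\<And>n w. w \<in> unit_disc \<Longrightarrow> cmod (F n w) \<le> C * (1 - cmod w) powr (- s)"
    and G_hol: "G holomorphic_on unit_disc" and G0: "G 0 = 0"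
    and G_growth: "\<And>w. w \<in> unit_disc \<Longrightarrow> cmod (G w) \<le> C * (1 - cmod w) powr (- s)"
    and unif: "\<And>\<rho>. \<rho> < 1 \<Longrightarrow> uniform_limit (cball 0 \<rho>) F G sequentially"
    and g_hol: "g holomorphic_on unit_disc"
    and g_growth: "\<And>w. w \<in> unit_disc \<Longrightarrow> cmod (g w) \<le> A * (1 - cmod w) powr (- \<gamma>)"
    and "0 \<le> C" "0 \<le> A" "0 \<le> s" "0 \<le> \<gamma>" "s + \<gamma> < \<alpha>"
  shows "(\<lambda>n. bloch_norm \<alpha> (\<lambda>z. cesaro_op g (F n) z - cesaro_op g G z)) \<longlonglongrightarrow> 0"
proof (rule ereal_tendsto_0I[OF bloch_norm_nonneg])
  fix e :: real assume "0 < e"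
  obtain t where t: "0 < t" "t \<le> 1/2"
    "2 powr (\<alpha> + 1) * (2 * C) * A * t powr (\<alpha> - s - \<gamma>) \<le> e / 2"
    using powr_le_smallE[of "\<alpha> - s - \<gamma>" "e / 2" "2 powr (\<alpha> + 1) * (2 * C) * A"] assms(10-14) \<open>0 < e\<close>
    by auto
  define c where "c = 2 * A * t powr (- \<gamma>)"
  have "0 < c + 1" using \<open>0 \<le> A\<close> by (simp add: c_def add_nonneg_pos)
  define E where "E = e / 2 / (c + 1)"
  have "0 < E" using \<open>0 < e\<close> \<open>0 < c + 1\<close> by (simp add: E_def)
  have "2 * E * A * t powr (- \<gamma>) = E * c" by (simp add: c_def mult_ac)
  also have "\<dots> \<le> E * (c + 1)" using \<open>0 < E\<close> by simp
  also have "\<dots> = e / 2" using \<open>0 < c + 1\<close> unfolding E_def by (simp add: field_simps)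
  finally have E_term: "2 * E * A * t powr (- \<gamma>) \<le> e / 2" .
  have "\<forall>\<^sub>F n in sequentially. \<forall>w\<in>cball 0 (1 - t). dist (F n w) (G w) < E"
    using uniform_limitD[OF unif \<open>0 < E\<close>] t by simp
  then show "\<forall>\<^sub>F n in sequentially.
               bloch_norm \<alpha> (\<lambda>z. cesaro_op g (F n) z - cesaro_op g G z) \<le> ereal e"
  proof eventually_elim
    case (elim n)
    have "bloch_norm \<alpha> (\<lambda>z. cesaro_op g (F n) z - cesaro_op g G z)
            \<le> ereal (2 * E * A * (1 - (1 - t)) powr (- \<gamma>)
                     + 2 powr (\<alpha> + 1) * (2 * C) * A * (1 - (1 - t)) powr (\<alpha> - s - \<gamma>))"
      by (rule bloch_norm_cesaro_op_diff_le[OF F_hol F0 F_growth G_hol G0 G_growth g_hol g_growth])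
        (use assms(10-14) t elim in \<open>auto simp: dist_norm less_imp_le\<close>)
    also have "\<dots> \<le> ereal e" using E_term t(3) by simp
    finally show ?case .
  qed
qed

lemma cesaro_op_convergent_subseq:
  fixes F :: "nat \<Rightarrow> complex \<Rightarrow> complex"
  assumes F_hol: "\<And>n. F n holomorphic_on unit_disc" and F0: "\<And>n. F n 0 = 0"
    and F_growth: "\<And>n w. w \<in> unit_disc \<Longrightarrow> cmod (F n w) \<le> C * (1 - cmod w) powr (- s)"
    and g_hol: "g holomorphic_on unit_disc"
    and g_growth: "\<And>w. w \<in> unit_disc \<Longrightarrow> cmod (g w) \<le> A * (1 - cmod w) powr (- \<gamma>)"
    and "0 \<le> C" "0 \<le> A" "0 \<le> s" "0 \<le> \<gamma>" "s + \<gamma> < \<alpha>"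
  obtains r h where "strict_mono r" "h \<in> bloch0 \<alpha>"
    "(\<lambda>n. bloch_norm \<alpha> (\<lambda>z. cesaro_op g (F (r n)) z - h z)) \<longlonglongrightarrow> 0"
proof -
  obtain G r where G_hol: "G holomorphic_on unit_disc" and r: "strict_mono r"
    and lim: "\<And>w. w \<in> unit_disc \<Longrightarrow> (\<lambda>n. F (r n) w) \<longlonglongrightarrow> G w"
    and G_growth: "\<And>w. w \<in> unit_disc \<Longrightarrow> cmod (G w) \<le> C * (1 - cmod w) powr (- s)"
    and unif: "\<And>\<rho>. \<rho> < 1 \<Longrightarrow> uniform_limit (cball 0 \<rho>) (F \<circ> r) G sequentially"
    by (rule Montel_growth_bound[of F, OF F_hol F_growth]) (use assms(6,8) in auto)
  have "(\<lambda>n. 0) \<longlonglongrightarrow> G 0" using lim[of 0] F0 by simp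
  then have G0: "G 0 = 0" by (simp add: LIMSEQ_const_iff)
  have "(\<lambda>n. bloch_norm \<alpha> (\<lambda>z. cesaro_op g ((F \<circ> r) n) z - cesaro_op g G z)) \<longlonglongrightarrow> 0"
    by (rule bloch_norm_cesaro_op_diff_tendsto_0[OF _ _ _ G_hol G0 G_growth unif g_hol g_growth])
      (use F_hol F0 F_growth assms(6-10) in auto)
  moreover have "cesaro_op g G \<in> bloch0 \<alpha>"
    by (rule cesaro_op_in_bloch0[OF G_hol G0 G_growth g_hol g_growth]) (use assms(6-10) in auto)
  ultimately show ?thesis using that r by (simp add: o_def)
qed

lemma compact_op_cesaro_op:
  assumes g_hol: "g holomorphic_on unit_disc"
    and g_growth: "\<And>w. w \<in> unit_disc \<Longrightarrow> cmod (g w) \<le> A * (1 - cmod w) powr (- \<gamma>)"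
    and "0 \<le> A" "0 \<le> \<gamma>" "\<gamma> < \<alpha>" "\<gamma> < 1"
  shows "compact_op \<alpha> (cesaro_op g)"
proof -
  \<comment> \<open>the midpoint of the admissible range \<open>max 0 (\<alpha> - 1) < s < \<alpha> - \<gamma>\<close> of growth exponents\<close>
  define s where "s = \<alpha> - (\<gamma> + min \<alpha> 1) / 2"
  have s: "0 < s" "\<alpha> \<le> s + 1" "s + \<gamma> < \<alpha>" "0 \<le> \<alpha>"
    using assms(4-6) by (auto simp: s_def min_def)
  have hol: "f holomorphic_on unit_disc" "f 0 = 0" if "f \<in> bloch0 \<alpha>" for f
    using that by (auto simp: bloch0_def)
  have growth: "cmod (f w) \<le> M / s * (1 - cmod w) powr (- s)"
    if "f \<in> bloch0 \<alpha>" "bloch_norm \<alpha> f \<le> ereal M" "w \<in> unit_disc" for f M w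
    using bloch_growth[OF hol[OF that(1)] that(2) s(4,1,2) that(3)] .
  have maps: "cesaro_op g f \<in> bloch0 \<alpha>" if f: "f \<in> bloch0 \<alpha>" for f
  proof -
    obtain M where M: "0 \<le> M" "bloch_norm \<alpha> f = ereal M" using bloch0_bloch_normE[OF f] .
    then have "cmod (f w) \<le> M / s * (1 - cmod w) powr (- s)" if "w \<in> unit_disc" for w
      using growth[OF f _ that] by simp
    then show ?thesis
      by (rule cesaro_op_in_bloch0[OF hol[OF f] _ g_hol g_growth]) (use s M assms(3,4) in auto)
  qed
  have seq: "\<exists>r h. strict_mono r \<and> h \<in> bloch0 \<alpha> \<and>
               (\<lambda>n. bloch_norm \<alpha> (\<lambda>z. cesaro_op g (F (r n)) z - h z)) \<longlonglongrightarrow> 0"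
    if F: "\<forall>n. F n \<in> bloch0 \<alpha> \<and> bloch_norm \<alpha> (F n) \<le> 1" for F :: "nat \<Rightarrow> complex \<Rightarrow> complex"
  proof -
    have F_hol: "F n holomorphic_on unit_disc" and F0: "F n 0 = 0" for n
      using F hol by blast+
    have F_growth: "cmod (F n w) \<le> 1 / s * (1 - cmod w) powr (- s)" if "w \<in> unit_disc" for n w
      using growth[of "F n" 1 w] F that by (simp add: one_ereal_def)
    obtain r h where "strict_mono r" "h \<in> bloch0 \<alpha>"
      "(\<lambda>n. bloch_norm \<alpha> (\<lambda>z. cesaro_op g (F (r n)) z - h z)) \<longlonglongrightarrow> 0"
      by (rule cesaro_op_convergent_subseq[of F "1 / s" s g A \<gamma> \<alpha>, OF F_hol F0 F_growth g_hol g_growth])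
        (use s assms(3,4) in auto)
    then show ?thesis by blast
  qed
  show ?thesis
    unfolding compact_op_def
    using maps seq by (auto intro: cesaro_op_cong cesaro_op_add cesaro_op_cmult hol g_hol)
qed

theorem corollary4p1:
  fixes \<alpha> \<beta> :: real and k :: nat and a b :: "nat \<Rightarrow> complex" and h :: "complex \<Rightarrow> complex"
  assumes "\<alpha> > 0"
    and "(\<beta> < \<alpha> \<and> \<alpha> < 1) \<or> (\<beta> < 1 \<and> 1 < \<alpha>) \<or> (\<beta> < \<alpha> \<and> \<alpha> = 1)"
    and "k \<ge> 1"
    and "inj_on b {..<k}"
    and "\<forall>j<k. cmod (b j) = 1"
    and "\<forall>j<k. a j \<noteq> 0"
    and "h holomorphic_on unit_disc"
    and "bounded (h ` unit_disc)"
  shows "(\<forall>f\<in>bloch0 \<alpha>. cesaro_op (g_beta \<beta> k a b h) f \<in> bloch0 \<alpha>) \<and>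
         ess_norm \<alpha> (cesaro_op (g_beta \<beta> k a b h)) = 0"
proof -
  obtain A where "0 \<le> A"
    and growth: "\<And>z. z \<in> unit_disc \<Longrightarrow>
                   cmod (g_beta \<beta> k a b h z) \<le> A * (1 - cmod z) powr (- max \<beta> 0)"
    using g_beta_growth[OF assms(5,8)] by blast
  moreover have "max \<beta> 0 < \<alpha>" "max \<beta> 0 < 1" using assms(1,2) by auto
  ultimately have "compact_op \<alpha> (cesaro_op (g_beta \<beta> k a b h))"
    by (intro compact_op_cesaro_op[OF g_beta_holomorphic[OF assms(5,7)] growth]) auto
  then show ?thesis using ess_norm_eq_0_if_compact_op unfolding compact_op_def by blast
qed

end
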